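(* $\ker\Lambda$ is the smallest ideal of $\mathcal H_{CK}$ which is stable under $B_+$ and contains $a\bowtie b-ab$ for all nonempty rooted trees $a,b$.
   Context: Let $k$ be a field of characteristic $0$. $\mathcal H_{CK}$ is the free commutative $k$-algebra on isomorphism classes of nonempty (non-planar, finite) rooted trees, i.e. rooted forests with unit the empty forest $\mathbf 1$; $B_+:\mathcal H_{CK}\to\mathcal H_{CK}$ is the linear map sending a forest $t_1\cdots t_n$ to the tree obtained by joining the roots of $t_1,\dots,t_n$ to a new root ($B_+(\mathbf 1)=\bullet$, the one-vertex tree). $\mathcal A=k[x]$ carries the quasi-shuffle product $\diamond$ determined by $\mathbf 1\diamond u=u\diamond\mathbf 1=u$ and $x^k\diamond x^l=(x^{k-1}\diamond x^l)x+(x^k\diamond x^{l-1})x+(x^{k-1}\diamond x^{l-1})x$ for $k,l\ge1$. $\Lambda:\mathcal H_{CK}\to(\mathcal A,\diamond)$ is the unique unital algebra morphism with $\Lambda(B_+(t_1\cdots t_n))=(\Lambda(t_1)\diamond\cdots\diamond\Lambda(t_n))x$. For trees $a=B_+(a_1\cdots a_n)$, $b=B_+(b_1\cdots b_p)$: $a\circ b=B_+(a_1\cdots a_nb)$, $a\times b=B_+(a_1\cdots a_nb_1\cdots b_p)$, $a\bowtie b=a\circ b+b\circ a+a\times b$; $ab$ is the product (forest) in $\mathcal H_{CK}$. *)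

theory Defs
  imports "HOL-Library.Multiset" "HOL-Library.Poly_Mapping" "HOL-Computational_Algebra.Polynomial"
begin

text \<open>Non-planar finite rooted trees: a root together with a multiset of subtrees.
  Forests are multisets of trees; the empty forest is the unit.\<close>
datatype rtree = Node "rtree multiset"

text \<open>Connes--Kreimer algebra: free commutative k-algebra on trees, i.e. finitely
  supported k-linear combinations of forests (monomials), with the convolution product.\<close>
type_synonym 'k hck = "rtree multiset \<Rightarrow>\<^sub>0 'k"

definition forest :: "rtree multiset \<Rightarrow> 'k::comm_ring_1 hck" where
  "forest F = Poly_Mapping.single F 1"

definition tree :: "rtree \<Rightarrow> 'k::comm_ring_1 hck" where
  "tree t = forest {#t#}"

definition scal :: "'k \<Rightarrow> 'k::comm_ring_1 hck" where
  "scal c = Poly_Mapping.single {#} c"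

definition Bplus :: "'k::comm_ring_1 hck \<Rightarrow> 'k hck" where
  "Bplus h = (\<Sum>F\<in>Poly_Mapping.keys h. Poly_Mapping.single {#Node F#} (Poly_Mapping.lookup h F))"

fun tcirc :: "rtree \<Rightarrow> rtree \<Rightarrow> rtree" where
  "tcirc (Node A) b = Node (A + {#b#})"

fun ttimes :: "rtree \<Rightarrow> rtree \<Rightarrow> rtree" where
  "ttimes (Node A) (Node B) = Node (A + B)"

definition bowtie :: "rtree \<Rightarrow> rtree \<Rightarrow> 'k::comm_ring_1 hck" where
  "bowtie a b = tree (tcirc a b) + tree (tcirc b a) + tree (ttimes a b)"

fun qsh_mon :: "nat \<Rightarrow> nat \<Rightarrow> 'k::comm_ring_1 poly" where
  "qsh_mon 0 l = monom 1 l"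
| "qsh_mon k 0 = monom 1 k"
| "qsh_mon (Suc k) (Suc l) =
     (qsh_mon k (Suc l) + qsh_mon (Suc k) l + qsh_mon k l) * [:0, 1:]"

definition qsh :: "'k::comm_ring_1 poly \<Rightarrow> 'k poly \<Rightarrow> 'k poly" (infixl "\<diamondop>" 70) where
  "p \<diamondop> q = (\<Sum>i\<le>degree p. \<Sum>j\<le>degree q. smult (coeff p i * coeff q j) (qsh_mon i j))"

text \<open>Lambda: unital k-algebra morphism H_CK \<rightarrow> (k[x], quasi-shuffle) with
  Lambda(B_+(t_1...t_n)) = (Lambda(t_1) \<diamond> ... \<diamond> Lambda(t_n)) x.
  Since Lambda is multiplicative, Lambda(t_1...t_n) = Lambda(t_1) \<diamond> ... \<diamond> Lambda(t_n),
  so the recursion is Lambda(B_+(F)) = Lambda(F) * x for every forest F.\<close>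
definition is_Lambda :: "('k::field_char_0 hck \<Rightarrow> 'k poly) \<Rightarrow> bool" where
  "is_Lambda L \<longleftrightarrow>
     (\<forall>h g. L (h + g) = L h + L g) \<and>
     (\<forall>c h. L (scal c * h) = smult c (L h)) \<and>
     L 1 = 1 \<and>
     (\<forall>h g. L (h * g) = L h \<diamondop> L g) \<and>
     (\<forall>F. L (Bplus (forest F)) = L (forest F) * [:0, 1:])"

definition is_ideal :: "'k::comm_ring_1 hck set \<Rightarrow> bool" where
  "is_ideal I \<longleftrightarrow> 0 \<in> I \<and> (\<forall>x\<in>I. \<forall>y\<in>I. x + y \<in> I) \<and> (\<forall>r. \<forall>x\<in>I. r * x \<in> I)"

end

theory Submission
  imports Defs
begin

(* (1) The kernel is admissible.  Lambda is multiplicative and linear, and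
       Lambda(B_+ h) = Lambda(h) x; the defining recursion of the quasi-shuffle,
       (p x) \<diamond> (q x) = (p \<diamond> q x + p x \<diamond> q + p \<diamond> q) x, says exactly that
       Lambda(a \<bowtie> b) = Lambda(a b).
   (2) The kernel is contained in every admissible ideal I.  Call h reducible modulo I
       if h is congruent modulo I to a linear combination of ladders (the forests
       \<one>, B_+(\<one>), B_+(B_+(\<one>)), ...).  Using  a b \<equiv> a \<bowtie> b  and induction on the total
       height, products of two ladders are reducible; reducible elements are closed under
       sums, scalars, products and B_+, hence every element is reducible.  Applying this
       to the admissible ideal I \<inter> ker Lambda, an element h of the kernel is congruent
       to a ladder combination g that lies in the kernel too; since Lambda sends the
       ladder of height n to x^n, it is injective on ladder combinations, so g = 0
       and h \<in> I. *)

section \<open>The quasi-shuffle product\<close>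

lemma qsh_degree_bound:
  assumes "degree p \<le> m" "degree q \<le> n"
  shows "p \<diamondop> q = (\<Sum>i\<le>m. \<Sum>j\<le>n. smult (coeff p i * coeff q j) (qsh_mon i j))"
proof -
  have "p \<diamondop> q = (\<Sum>i\<le>degree p. \<Sum>j\<le>n. smult (coeff p i * coeff q j) (qsh_mon i j))"
    unfolding qsh_def
    by (intro sum.cong refl sum.mono_neutral_left) (use assms in \<open>auto simp: coeff_eq_0\<close>)
  also have "\<dots> = (\<Sum>i\<le>m. \<Sum>j\<le>n. smult (coeff p i * coeff q j) (qsh_mon i j))"
    by (intro sum.mono_neutral_left) (use assms in \<open>auto simp: coeff_eq_0\<close>)
  finally show ?thesis .
qed

lemma qsh_zero_right: "p \<diamondop> 0 = 0"
  by (simp add: qsh_def)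

lemma times_X_eq_pCons: "(p::'a::comm_ring_1 poly) * [:0, 1:] = pCons 0 p"
  by simp

text \<open>The recursion defining the quasi-shuffle on monomials, extended bilinearly to
  arbitrary polynomials divisible by x.\<close>
lemma qsh_times_X:
  "(p * [:0,1:]) \<diamondop> (q * [:0,1:]) =
     (p \<diamondop> (q * [:0,1:]) + (p * [:0,1:]) \<diamondop> q + p \<diamondop> q) * [:0,1:]"
proof -
  define m where "m = degree p"
  define n where "n = degree q"
  have dp: "degree (pCons 0 p) \<le> Suc m" and dq: "degree (pCons 0 q) \<le> Suc n"
    using degree_pCons_le m_def n_def by auto
  note shift = sum.atMost_Suc_shift coeff_pCons_0 coeff_pCons_Suc mult_zero_left
    mult_zero_right smult_0_left sum.neutral_const add_0_left
  let ?S = "\<lambda>f. \<Sum>i\<le>m. \<Sum>j\<le>n. smult (coeff p i * coeff q j) (f i j :: 'a poly)"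
  have LHS: "(p * [:0,1:]) \<diamondop> (q * [:0,1:]) = ?S (\<lambda>i j. qsh_mon (Suc i) (Suc j))"
    unfolding times_X_eq_pCons by (subst qsh_degree_bound[OF dp dq]) (simp only: shift)
  have R1: "p \<diamondop> (q * [:0,1:]) = ?S (\<lambda>i j. qsh_mon i (Suc j))"
    unfolding times_X_eq_pCons
    by (subst qsh_degree_bound[OF _ dq]) (simp_all only: m_def order_refl shift)
  have R2: "(p * [:0,1:]) \<diamondop> q = ?S (\<lambda>i j. qsh_mon (Suc i) j)"
    unfolding times_X_eq_pCons
    by (subst qsh_degree_bound[OF dp]) (simp_all only: n_def order_refl shift)
  have R3: "p \<diamondop> q = ?S qsh_mon"
    by (rule qsh_degree_bound) (simp_all add: m_def n_def)
  have "?S (\<lambda>i j. qsh_mon i (Suc j)) + ?S (\<lambda>i j. qsh_mon (Suc i) j) + ?S qsh_mon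
      = ?S (\<lambda>i j. qsh_mon i (Suc j) + qsh_mon (Suc i) j + qsh_mon i j)"
    by (simp only: sum.distrib[symmetric] smult_add_right)
  then show ?thesis
    unfolding LHS R1 R2 R3 qsh_mon.simps(3)
    by (simp only: sum_distrib_right mult_smult_left)
qed


section \<open>Forests, scalars and B_+ in H_CK\<close>

lemma forest_mult: "forest F * forest G = (forest (F + G) :: 'k::comm_ring_1 hck)"
  by (simp add: forest_def mult_single)

lemma forest_empty: "(forest {#} :: 'k::comm_ring_1 hck) = 1"
  by (simp add: forest_def)

lemma scal_forest: "scal c * forest F = (Poly_Mapping.single F c :: 'k::comm_ring_1 hck)"
  by (simp add: scal_def forest_def mult_single)

lemma keys_scal: "Poly_Mapping.keys (scal c * (h::'k::comm_ring_1 hck)) \<subseteq> Poly_Mapping.keys h"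
proof -
  have "Poly_Mapping.lookup (scal c * h) F = c * Poly_Mapping.lookup h F" for F
    unfolding scal_def mult_map_scale_conv_mult[symmetric] by (simp add: map.rep_eq when_def)
  then show ?thesis by (auto simp: in_keys_iff)
qed

lemma forest_decomposition:
  "(h::'k::comm_ring_1 hck) = (\<Sum>F\<in>Poly_Mapping.keys h. scal (Poly_Mapping.lookup h F) * forest F)"
  by (rule poly_mapping_eqI) (simp add: scal_forest lookup_sum lookup_single when_def in_keys_iff)

lemma Bplus_forest: "Bplus (forest F) = (tree (Node F) :: 'k::comm_ring_1 hck)"
  by (simp add: Bplus_def forest_def tree_def)

lemma Bplus_decomposition: "Bplus (h::'k::comm_ring_1 hck) =
   (\<Sum>F\<in>Poly_Mapping.keys h. scal (Poly_Mapping.lookup h F) * tree (Node F))"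
  by (simp add: Bplus_def scal_forest tree_def)

lemma lookup_Bplus_Node:
  "Poly_Mapping.lookup (Bplus (h::'k::comm_ring_1 hck)) {#Node F#} = Poly_Mapping.lookup h F"
  by (simp add: Bplus_def lookup_sum lookup_single when_def in_keys_iff)

lemma lookup_Bplus_other:
  "G \<notin> range (\<lambda>F. {#Node F#}) \<Longrightarrow> Poly_Mapping.lookup (Bplus (h::'k::comm_ring_1 hck)) G = 0"
  unfolding Bplus_def by (auto simp: lookup_sum lookup_single when_def intro!: sum.neutral)

lemma Bplus_add: "Bplus ((h::'k::comm_ring_1 hck) + g) = Bplus h + Bplus g"
proof (rule poly_mapping_eqI)
  fix G
  show "Poly_Mapping.lookup (Bplus (h + g)) G = Poly_Mapping.lookup (Bplus h + Bplus g) G"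
    by (cases "G \<in> range (\<lambda>F. {#Node F#})")
      (auto simp: lookup_Bplus_Node lookup_Bplus_other lookup_add)
qed

lemma keys_Bplus:
  "Poly_Mapping.keys (Bplus (h::'k::comm_ring_1 hck)) \<subseteq> (\<lambda>F. {#Node F#}) ` Poly_Mapping.keys h"
proof
  fix G assume G: "G \<in> Poly_Mapping.keys (Bplus h)"
  then obtain F where "G = {#Node F#}"
    using lookup_Bplus_other[of G h] by (auto simp: in_keys_iff)
  with G show "G \<in> (\<lambda>F. {#Node F#}) ` Poly_Mapping.keys h"
    by (auto simp: in_keys_iff lookup_Bplus_Node)
qed


section \<open>Ladders\<close>

fun ladder :: "nat \<Rightarrow> rtree multiset" where
  "ladder 0 = {#}"
| "ladder (Suc n) = {#Node (ladder n)#}"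

lemma ladder_inj: "ladder i = ladder j \<longleftrightarrow> i = j"
proof (induction i arbitrary: j)
  case 0 then show ?case by (cases j) auto
next
  case (Suc i) then show ?case by (cases j) auto
qed

lemma forest_ladder_Suc: "forest (ladder (Suc n)) = (tree (Node (ladder n)) :: 'k::comm_ring_1 hck)"
  by (simp add: tree_def)

text \<open>The element a \<bowtie> b for two ladder trees is B_+ applied to products of ladders of
  smaller total height; this drives the reduction of ladder products.\<close>
lemma bowtie_ladders:
  "bowtie (Node (ladder i)) (Node (ladder j)) =
     Bplus (forest (ladder i) * forest (ladder (Suc j)))
   + Bplus (forest (ladder j) * forest (ladder (Suc i)))
   + Bplus (forest (ladder i) * forest (ladder j) :: 'k::comm_ring_1 hck)"
  by (simp add: bowtie_def Bplus_forest forest_mult)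

definition ladder_comb :: "'k::comm_ring_1 hck \<Rightarrow> bool" where
  "ladder_comb g \<longleftrightarrow> Poly_Mapping.keys g \<subseteq> range ladder"


section \<open>Lambda\<close>

context
  fixes L :: "'k::field_char_0 hck \<Rightarrow> 'k poly"
  assumes Lambda: "is_Lambda L"
begin

lemma L_add: "L (h + g) = L h + L g" using Lambda unfolding is_Lambda_def by blast
lemma L_scal: "L (scal c * h) = smult c (L h)" using Lambda unfolding is_Lambda_def by blast
lemma L_one: "L 1 = 1" using Lambda unfolding is_Lambda_def by blast
lemma L_mult: "L (h * g) = L h \<diamondop> L g" using Lambda unfolding is_Lambda_def by blast
lemma L_tree: "L (tree (Node F)) = L (forest F) * [:0, 1:]"
  using Lambda by (simp add: is_Lambda_def Bplus_forest[symmetric])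

lemma L_zero: "L 0 = 0"
  using L_add[of 0 0] by simp

lemma L_diff: "L (h - g) = L h - L g"
  using L_add[of "h - g" g] by simp

lemma L_sum: "L (sum f A) = (\<Sum>x\<in>A. L (f x))"
  by (induct A rule: infinite_finite_induct) (simp_all add: L_zero L_add)

lemma L_decomposition:
  "L h = (\<Sum>F\<in>Poly_Mapping.keys h. smult (Poly_Mapping.lookup h F) (L (forest F)))"
  by (subst forest_decomposition) (simp add: L_sum L_scal)

lemma L_Bplus: "L (Bplus h) = L h * [:0, 1:]"
proof -
  have "L (Bplus h)
      = (\<Sum>F\<in>Poly_Mapping.keys h. smult (Poly_Mapping.lookup h F) (L (forest F) * [:0, 1:]))"
    by (simp add: Bplus_decomposition L_sum L_scal L_tree)
  also have "\<dots> = L h * [:0, 1:]"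
    by (subst (2) L_decomposition) (simp add: sum_distrib_right mult_smult_left del: mult_pCons_right)
  finally show ?thesis .
qed

lemma L_bowtie: "L (bowtie a b) = L (tree a * tree b)"
proof -
  obtain A B where a: "a = Node A" and b: "b = Node B" by (metis rtree.exhaust)
  define p where "p = L (forest A)"
  define q where "q = L (forest B)"
  have ta: "L (tree a) = p * [:0,1:]" by (simp only: a p_def L_tree)
  have tb: "L (tree b) = q * [:0,1:]" by (simp only: b q_def L_tree)
  have fab: "forest (A + {#b#}) = forest A * tree b" by (simp add: tree_def forest_mult)
  have ab: "L (tree (tcirc a b)) = (p \<diamondop> (q * [:0,1:])) * [:0,1:]"
    by (simp only: a tcirc.simps L_tree fab L_mult tb p_def)
  have fba: "forest (B + {#a#}) = tree a * forest B" by (simp add: tree_def forest_mult add.commute)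
  have ba: "L (tree (tcirc b a)) = ((p * [:0,1:]) \<diamondop> q) * [:0,1:]"
    by (simp only: b tcirc.simps L_tree fba L_mult ta q_def)
  have times: "L (tree (ttimes a b)) = (p \<diamondop> q) * [:0,1:]"
    by (simp only: a b ttimes.simps L_tree forest_mult[symmetric] L_mult p_def q_def)
  show ?thesis
    unfolding bowtie_def L_add ab ba times L_mult ta tb qsh_times_X
    by (simp only: distrib_right)
qed

lemma L_ladder: "L (forest (ladder n)) = monom 1 n"
proof (induction n)
  case 0 then show ?case by (simp add: forest_empty L_one)
next
  case (Suc n)
  then show ?case by (simp only: forest_ladder_Suc L_tree times_X_eq_pCons monom_Suc)
qed

text \<open>Since ladders go to distinct monomials, Lambda is injective on ladder combinations.\<close>
lemma L_ladder_comb_eq_0: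
  assumes "ladder_comb g" "L g = 0"
  shows "g = 0"
proof (rule poly_mapping_eqI)
  fix F
  show "Poly_Mapping.lookup g F = Poly_Mapping.lookup 0 F"
  proof (cases "F \<in> Poly_Mapping.keys g")
    case True
    then obtain k where k: "F = ladder k" using assms(1) unfolding ladder_comb_def by blast
    have "coeff (L g) k
        = (\<Sum>G\<in>Poly_Mapping.keys g. Poly_Mapping.lookup g G * coeff (L (forest G)) k)"
      by (subst L_decomposition) (simp add: coeff_sum)
    also have "\<dots> = (\<Sum>G\<in>Poly_Mapping.keys g. if G = F then Poly_Mapping.lookup g G else 0)"
    proof (rule sum.cong[OF refl])
      fix G assume "G \<in> Poly_Mapping.keys g"
      then obtain j where "G = ladder j" using assms(1) unfolding ladder_comb_def by blast
      then show "Poly_Mapping.lookup g G * coeff (L (forest G)) k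
          = (if G = F then Poly_Mapping.lookup g G else 0)"
        by (simp add: k L_ladder coeff_monom ladder_inj)
    qed
    also have "\<dots> = Poly_Mapping.lookup g F" using True by simp
    finally show ?thesis using assms(2) by simp
  qed (simp add: in_keys_iff)
qed

end


section \<open>Admissible ideals\<close>

definition admissible :: "'k::comm_ring_1 hck set \<Rightarrow> bool" where
  "admissible I \<longleftrightarrow> is_ideal I \<and> Bplus ` I \<subseteq> I \<and> (\<forall>a b. bowtie a b - tree a * tree b \<in> I)"

lemma admissible_Int: "admissible I \<Longrightarrow> admissible J \<Longrightarrow> admissible (I \<inter> J)"
  by (auto simp: admissible_def is_ideal_def)

lemma admissible_ker:
  fixes L :: "'k::field_char_0 hck \<Rightarrow> 'k poly"
  assumes "is_Lambda L"
  shows "admissible {h. L h = 0}"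
  unfolding admissible_def is_ideal_def
  by (auto simp: L_zero[OF assms] L_add[OF assms] L_mult[OF assms] qsh_zero_right
      L_Bplus[OF assms] L_diff[OF assms] L_bowtie[OF assms])

definition reducible :: "'k::comm_ring_1 hck set \<Rightarrow> 'k hck \<Rightarrow> bool" where
  "reducible I h \<longleftrightarrow> (\<exists>g. ladder_comb g \<and> h - g \<in> I)"

context
  fixes I :: "'k::comm_ring_1 hck set"
  assumes adm: "admissible I"
begin

lemma ideal_zero: "0 \<in> I" using adm unfolding admissible_def is_ideal_def by blast
lemma ideal_add: "x \<in> I \<Longrightarrow> y \<in> I \<Longrightarrow> x + y \<in> I"
  using adm unfolding admissible_def is_ideal_def by blast
lemma ideal_mult: "x \<in> I \<Longrightarrow> r * x \<in> I" using adm unfolding admissible_def is_ideal_def by blast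
lemma ideal_Bplus: "x \<in> I \<Longrightarrow> Bplus x \<in> I" using adm unfolding admissible_def by blast
lemma ideal_bowtie: "bowtie a b - tree a * tree b \<in> I" using adm unfolding admissible_def by blast

lemma ideal_diff: "x \<in> I \<Longrightarrow> y \<in> I \<Longrightarrow> x - y \<in> I"
  using ideal_add[of x "(-1) * y"] ideal_mult[of y "-1"] by simp

lemma reducible_ladder_comb: "ladder_comb g \<Longrightarrow> reducible I g"
  unfolding reducible_def using ideal_zero by auto

lemma reducible_ladder: "reducible I (forest (ladder i))"
  by (rule reducible_ladder_comb) (simp add: ladder_comb_def forest_def)

lemma reducible_add: "reducible I h \<Longrightarrow> reducible I h' \<Longrightarrow> reducible I (h + h')"
proof -
  assume "reducible I h" "reducible I h'"
  then obtain g g' where g: "ladder_comb g" "h - g \<in> I" and g': "ladder_comb g'" "h' - g' \<in> I"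
    unfolding reducible_def by blast
  have "ladder_comb (g + g')"
    using order_trans[OF keys_add Un_least] g(1) g'(1) unfolding ladder_comb_def .
  moreover have "(h + h') - (g + g') \<in> I" using ideal_add[OF g(2) g'(2)] by (simp add: add_diff_add)
  ultimately show ?thesis unfolding reducible_def by blast
qed

lemma reducible_sum: "(\<And>x. x \<in> A \<Longrightarrow> reducible I (f x)) \<Longrightarrow> reducible I (sum f A)"
  by (induct A rule: infinite_finite_induct)
    (simp_all add: reducible_ladder_comb ladder_comb_def reducible_add)

lemma reducible_scal: "reducible I h \<Longrightarrow> reducible I (scal c * h)"
proof -
  assume "reducible I h"
  then obtain g where g: "ladder_comb g" "h - g \<in> I" unfolding reducible_def by blast
  have "ladder_comb (scal c * g)"
    using order_trans[OF keys_scal] g(1) unfolding ladder_comb_def .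
  moreover have "scal c * h - scal c * g \<in> I"
    using ideal_mult[OF g(2), of "scal c"] by (simp add: right_diff_distrib)
  ultimately show ?thesis unfolding reducible_def by blast
qed

lemma reducible_diff_ideal: "reducible I h \<Longrightarrow> x \<in> I \<Longrightarrow> reducible I (h - x)"
proof -
  assume "reducible I h" "x \<in> I"
  then obtain g where g: "ladder_comb g" "h - g \<in> I" unfolding reducible_def by blast
  have "(h - x) - g = (h - g) - x" by (simp add: algebra_simps)
  also have "\<dots> \<in> I" using ideal_diff[OF g(2) \<open>x \<in> I\<close>] .
  finally have "(h - x) - g \<in> I" .
  then show ?thesis using g(1) unfolding reducible_def by blast
qed

lemma reducible_Bplus: "reducible I h \<Longrightarrow> reducible I (Bplus h)"
proof -
  assume "reducible I h"
  then obtain g where g: "ladder_comb g" "h - g \<in> I" unfolding reducible_def by blast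
  have "ladder_comb (Bplus g)"
    unfolding ladder_comb_def
  proof
    fix G assume "G \<in> Poly_Mapping.keys (Bplus g)"
    then obtain F where "F \<in> Poly_Mapping.keys g" "G = {#Node F#}" using keys_Bplus by blast
    then obtain i where "G = ladder (Suc i)" using g(1) unfolding ladder_comb_def by auto
    then show "G \<in> range ladder" by blast
  qed
  moreover have "Bplus h - Bplus g = Bplus (h - g)"
    using Bplus_add[of "h - g" g] by simp
  then have "Bplus h - Bplus g \<in> I" using ideal_Bplus[OF g(2)] by simp
  ultimately show ?thesis unfolding reducible_def by blast
qed

text \<open>The heart of the argument: modulo I, the product of two ladder trees a b equals
  a \<bowtie> b, which is B_+ of ladder products of smaller total height.\<close>
lemma reducible_ladder_mult: "reducible I (forest (ladder i) * forest (ladder j))"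
proof (induction "i + j" arbitrary: i j rule: less_induct)
  case less
  consider "i = 0" | "j = 0" | i' j' where "i = Suc i'" "j = Suc j'"
    by (cases i; cases j) auto
  then show ?case
  proof cases
    case (3 i' j')
    define a where "a = Node (ladder i')"
    define b where "b = Node (ladder j')"
    have "reducible I (bowtie a b)"
      unfolding a_def b_def bowtie_ladders
      using 3 by (intro reducible_add reducible_Bplus less) auto
    then have "reducible I (bowtie a b - (bowtie a b - tree a * tree b))"
      using ideal_bowtie by (rule reducible_diff_ideal)
    then show ?thesis using 3 by (simp add: a_def b_def tree_def)
  qed (simp_all add: forest_empty reducible_ladder)
qed

lemma reducible_mult: "reducible I h \<Longrightarrow> reducible I h' \<Longrightarrow> reducible I (h * h')"
proof -
  assume "reducible I h" "reducible I h'"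
  then obtain s t where s: "ladder_comb s" "h - s \<in> I" and t: "ladder_comb t" "h' - t \<in> I"
    unfolding reducible_def by blast
  let ?c = "\<lambda>g F. scal (Poly_Mapping.lookup g F)"
  have "s * t = (\<Sum>F\<in>Poly_Mapping.keys s. \<Sum>G\<in>Poly_Mapping.keys t.
      ?c s F * (?c t G * (forest F * forest G)))"
    by (subst forest_decomposition[of s], subst forest_decomposition[of t])
      (simp add: sum_product mult.assoc mult.left_commute)
  also have "reducible I \<dots>"
  proof (intro reducible_sum reducible_scal)
    fix F G assume "F \<in> Poly_Mapping.keys s" "G \<in> Poly_Mapping.keys t"
    then obtain i j where "F = ladder i" "G = ladder j"
      using s(1) t(1) unfolding ladder_comb_def by blast
    then show "reducible I (forest F * forest G)" by (simp add: reducible_ladder_mult)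
  qed
  finally have st: "reducible I (s * t)" .
  have "h * h' - s * t = s * (h' - t) + h' * (h - s)" by (simp add: algebra_simps)
  then have "- (h * h' - s * t) \<in> I"
    using ideal_mult[OF ideal_add[OF ideal_mult[OF t(2)] ideal_mult[OF s(2)]], of "-1"] by simp
  from reducible_diff_ideal[OF st this] show ?thesis by simp
qed

lemma reducible_forest: "(\<And>t. t \<in># F \<Longrightarrow> reducible I (tree t)) \<Longrightarrow> reducible I (forest F)"
proof (induction F)
  case empty
  then show ?case using reducible_ladder[of 0] by simp
next
  case (add t F)
  have "forest (add_mset t F) = tree t * (forest F :: 'k hck)" by (simp add: tree_def forest_mult)
  moreover have "reducible I (tree t * forest F)" using add by (intro reducible_mult) auto
  ultimately show ?case by (simp only:)
qed

lemma reducible_tree: "reducible I (tree t)"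
proof (induction t)
  case (Node F)
  then have "reducible I (forest F)" by (intro reducible_forest) auto
  then show ?case using reducible_Bplus Bplus_forest by metis
qed

lemma reducible_all: "reducible I h"
  by (subst forest_decomposition)
    (intro reducible_sum reducible_scal reducible_forest reducible_tree)

end

text \<open>Every admissible ideal contains the kernel of Lambda: reduce modulo I \<inter> ker Lambda.\<close>
lemma ker_subset_admissible:
  fixes L :: "'k::field_char_0 hck \<Rightarrow> 'k poly"
  assumes Lambda: "is_Lambda L" and adm: "admissible I" and h: "L h = 0"
  shows "h \<in> I"
proof -
  let ?J = "I \<inter> {h. L h = 0}"
  have "admissible ?J" using admissible_Int[OF adm admissible_ker[OF Lambda]] .
  then obtain g where g: "ladder_comb g" "h - g \<in> ?J"
    using reducible_all[of ?J h] unfolding reducible_def by blast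
  then have "L g = 0" using h L_diff[OF Lambda, of h g] by simp
  then have "g = 0" using L_ladder_comb_eq_0[OF Lambda g(1)] by simp
  then show "h \<in> I" using g(2) by simp
qed

theorem mainTheorem14:
  fixes L :: "'k::field_char_0 hck \<Rightarrow> 'k poly"
  assumes "is_Lambda L"
  shows "{h. L h = 0} =
    \<Inter> {I. is_ideal I \<and> Bplus ` I \<subseteq> I \<and>
           (\<forall>a b. bowtie a b - tree a * tree b \<in> I)}"
  unfolding admissible_def[symmetric]
proof (rule antisym)
  show "{h. L h = 0} \<subseteq> \<Inter> {I. admissible I}"
    using ker_subset_admissible[OF assms] by blast
  show "\<Inter> {I. admissible I} \<subseteq> {h. L h = 0}"
    using admissible_ker[OF assms] by (rule Inter_lower[OF CollectI])
qed

end
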